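(* Let $G$ be a group and $\rho_k:G\to\mathrm{GL}(W_k)$ (indexed by $k$) pairwise non-isomorphic irreducible representations satisfying the strong version of Schur's lemma. Let $U=\bigoplus_k W_k^{\oplus n_k}$ and $V=\bigoplus_k W_k^{\oplus m_k}$ ($n_k,m_k\ge0$ integers) carry the representations $\rho_U=\bigoplus_k\rho_k^{\oplus n_k}$, $\rho_V=\bigoplus_k\rho_k^{\oplus m_k}$. Let $t_U:U\to U$ and $t_V:V\to V$ be linear, with block components $(t_U)_{k\ell}:W_k^{\oplus n_k}\to W_\ell^{\oplus n_\ell}$ and $(t_V)_{k\ell}:W_k^{\oplus m_k}\to W_\ell^{\oplus m_\ell}$. Then $t_VL=Lt_U$ for every linear $(\rho_U,\rho_V)$-equivariant $L:U\to V$ if and only if all of the following hold: (i) if $m_k\neq0$ and $n_k\neq0$, then, viewed as $m_k\times m_k$ and $n_k\times n_k$ matrices of maps $W_k\to W_k$, $(t_V)_{kk}$ and $(t_U)_{kk}$ are diagonal with $(t_V)_{kk,ii}=(t_U)_{kk,jj}$ for all $i\in[m_k]$, $j\in[n_k]$; (ii) for all $k\neq\ell$ with $m_k,n_k,n_\ell$ all nonzero, $(t_U)_{k\ell}=0$; (iii) for all $k\neq\ell$ with $m_k,m_\ell,n_\ell$ all nonzero, $(t_V)_{k\ell}=0$.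
   Context: A representation is irreducible if it has no invariant subspaces other than $0$ and the whole (nonzero) space. It satisfies the strong version of Schur's lemma if every linear map $W_k\to W_k$ commuting with all $\rho_k(g)$ is a scalar multiple of the identity. $L$ is $(\rho_U,\rho_V)$-equivariant if $L\rho_U(g)=\rho_V(g)L$ for all $g\in G$. $\rho^{\oplus n}$ denotes the direct sum of $n$ copies. *)

theory Defs
  imports Complex_Main "HOL-Library.Function_Algebras" "HOL-Algebra.Group"
begin

text \<open>All spaces live inside one ambient vector space of type 'w over a field 'a,
  with scalar multiplication s. A subset A is a space via module.subspace s A.\<close>

definition lin_on :: "('a::field \<Rightarrow> 'v::ab_group_add \<Rightarrow> 'v) \<Rightarrow> ('a \<Rightarrow> 'u::ab_group_add \<Rightarrow> 'u)
    \<Rightarrow> 'v set \<Rightarrow> 'u set \<Rightarrow> ('v \<Rightarrow> 'u) \<Rightarrow> bool" where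
  "lin_on s1 s2 A B f \<longleftrightarrow> f ` A \<subseteq> B \<and> (\<forall>x\<in>A. \<forall>y\<in>A. f (x + y) = f x + f y)
     \<and> (\<forall>c. \<forall>x\<in>A. f (s1 c x) = s2 c (f x))"

definition is_rep :: "('g, 'b) monoid_scheme \<Rightarrow> ('a::field \<Rightarrow> 'w::ab_group_add \<Rightarrow> 'w) \<Rightarrow> 'w set
    \<Rightarrow> ('g \<Rightarrow> 'w \<Rightarrow> 'w) \<Rightarrow> bool" where
  "is_rep G s W r \<longleftrightarrow> module.subspace s W
     \<and> (\<forall>g\<in>carrier G. lin_on s s W W (r g) \<and> bij_betw (r g) W W)
     \<and> (\<forall>w\<in>W. r \<one>\<^bsub>G\<^esub> w = w)
     \<and> (\<forall>g\<in>carrier G. \<forall>h\<in>carrier G. \<forall>w\<in>W. r (g \<otimes>\<^bsub>G\<^esub> h) w = r g (r h w))"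

definition irred_rep :: "('g, 'b) monoid_scheme \<Rightarrow> ('a::field \<Rightarrow> 'w::ab_group_add \<Rightarrow> 'w) \<Rightarrow> 'w set
    \<Rightarrow> ('g \<Rightarrow> 'w \<Rightarrow> 'w) \<Rightarrow> bool" where
  "irred_rep G s W r \<longleftrightarrow> W \<noteq> {0} \<and>
     (\<forall>S. module.subspace s S \<and> S \<subseteq> W \<and> (\<forall>g\<in>carrier G. r g ` S \<subseteq> S) \<longrightarrow> S = {0} \<or> S = W)"

definition equivariant :: "('g, 'b) monoid_scheme \<Rightarrow> ('a::field \<Rightarrow> 'v::ab_group_add \<Rightarrow> 'v)
    \<Rightarrow> ('a \<Rightarrow> 'u::ab_group_add \<Rightarrow> 'u) \<Rightarrow> 'v set \<Rightarrow> 'u set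
    \<Rightarrow> ('g \<Rightarrow> 'v \<Rightarrow> 'v) \<Rightarrow> ('g \<Rightarrow> 'u \<Rightarrow> 'u) \<Rightarrow> ('v \<Rightarrow> 'u) \<Rightarrow> bool" where
  "equivariant G s1 s2 A B r1 r2 f \<longleftrightarrow> lin_on s1 s2 A B f
     \<and> (\<forall>g\<in>carrier G. \<forall>x\<in>A. f (r1 g x) = r2 g (f x))"

definition schur_strong :: "('g, 'b) monoid_scheme \<Rightarrow> ('a::field \<Rightarrow> 'w::ab_group_add \<Rightarrow> 'w) \<Rightarrow> 'w set
    \<Rightarrow> ('g \<Rightarrow> 'w \<Rightarrow> 'w) \<Rightarrow> bool" where
  "schur_strong G s W r \<longleftrightarrow>
     (\<forall>f. equivariant G s s W W r r f \<longrightarrow> (\<exists>c. \<forall>w\<in>W. f w = s c w))"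

definition rep_iso :: "('g, 'b) monoid_scheme \<Rightarrow> ('a::field \<Rightarrow> 'w::ab_group_add \<Rightarrow> 'w) \<Rightarrow> 'w set \<Rightarrow> 'w set
    \<Rightarrow> ('g \<Rightarrow> 'w \<Rightarrow> 'w) \<Rightarrow> ('g \<Rightarrow> 'w \<Rightarrow> 'w) \<Rightarrow> bool" where
  "rep_iso G s W1 W2 r1 r2 \<longleftrightarrow> (\<exists>f. equivariant G s s W1 W2 r1 r2 f \<and> bij_betw f W1 W2)"

text \<open>The direct sum \<Oplus>_{k\<in>I} W_k^{\<oplus> n k}: finitely supported families u k i, with u k i \<in> W k
  for k \<in> I, i < n k, and u k i = 0 otherwise.\<close>
definition dsum :: "'k set \<Rightarrow> ('k \<Rightarrow> 'w::zero set) \<Rightarrow> ('k \<Rightarrow> nat) \<Rightarrow> ('k \<Rightarrow> nat \<Rightarrow> 'w) set" where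
  "dsum I W n = {u. (\<forall>k i. if k \<in> I \<and> i < n k then u k i \<in> W k else u k i = 0)
                    \<and> finite {(k, i). u k i \<noteq> 0}}"

definition dscale :: "('a \<Rightarrow> 'w \<Rightarrow> 'w) \<Rightarrow> 'a \<Rightarrow> ('k \<Rightarrow> nat \<Rightarrow> 'w) \<Rightarrow> ('k \<Rightarrow> nat \<Rightarrow> 'w)" where
  "dscale s c u = (\<lambda>k i. s c (u k i))"

definition drep :: "'k set \<Rightarrow> ('k \<Rightarrow> nat) \<Rightarrow> ('k \<Rightarrow> 'g \<Rightarrow> 'w::zero \<Rightarrow> 'w) \<Rightarrow> 'g
    \<Rightarrow> ('k \<Rightarrow> nat \<Rightarrow> 'w) \<Rightarrow> ('k \<Rightarrow> nat \<Rightarrow> 'w)" where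
  "drep I n \<rho> g u = (\<lambda>k i. if k \<in> I \<and> i < n k then \<rho> k g (u k i) else 0)"

definition dinj :: "'k \<Rightarrow> nat \<Rightarrow> 'w::zero \<Rightarrow> ('k \<Rightarrow> nat \<Rightarrow> 'w)" where
  "dinj k j w = (\<lambda>k' i. if k' = k \<and> i = j then w else 0)"

text \<open>Matrix entry of t: row (k,i), column (l,j); a map W_l \<rightarrow> W_k.
  The block t_{kl} (row block k, column block l) consists of the entries blk t k i l j.\<close>
definition blk :: "(('k \<Rightarrow> nat \<Rightarrow> 'w::zero) \<Rightarrow> ('k \<Rightarrow> nat \<Rightarrow> 'w)) \<Rightarrow> 'k \<Rightarrow> nat \<Rightarrow> 'k \<Rightarrow> nat \<Rightarrow> 'w \<Rightarrow> 'w" where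
  "blk t k i l j w = t (dinj l j w) k i"

end

theory Submission
  imports Defs
begin

text \<open>Write an equivariant \<open>L : U \<rightarrow> V\<close> as a block matrix. Its entry from the \<open>j\<close>-th copy of
  \<open>W l\<close> to the \<open>i\<close>-th copy of \<open>W k\<close> is an equivariant map \<open>W l \<rightarrow> W k\<close>, so by Schur's lemma it
  vanishes for \<open>k \<noteq> l\<close> and is a scalar for \<open>k = l\<close>. Necessity of (i)-(iii) follows by testing
  the commutation against the elementary maps that copy one \<open>W k\<close>-component of \<open>U\<close> to one
  \<open>W k\<close>-component of \<open>V\<close>. For sufficiency, \<open>tV L\<close> and \<open>L tU\<close> are additive, so it suffices to
  compare them on a single copy of some \<open>W l\<close>; there the block form of \<open>L\<close> reduces the
  comparison entry by entry to (i)-(iii).\<close>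

lemma sum_apply: "(\<Sum>a\<in>A. f a) x = (\<Sum>a\<in>A. f a x)"
proof (cases "finite A")
  case True then show ?thesis by (induction A rule: finite_induct) auto
qed simp

lemma sum_eq_single:
  assumes "finite A" "a \<in> A" "\<And>x. x \<in> A \<Longrightarrow> x \<noteq> a \<Longrightarrow> f x = 0"
  shows "sum f A = f a"
  using assms by (simp add: sum.remove sum.neutral)

subsection \<open>Linear maps between subsets\<close>

lemma lin_on_mem: "lin_on s1 s2 A B f \<Longrightarrow> x \<in> A \<Longrightarrow> f x \<in> B"
  unfolding lin_on_def by blast

lemma lin_on_add: "lin_on s1 s2 A B f \<Longrightarrow> x \<in> A \<Longrightarrow> y \<in> A \<Longrightarrow> f (x + y) = f x + f y"
  unfolding lin_on_def by blast

lemma lin_on_scale: "lin_on s1 s2 A B f \<Longrightarrow> x \<in> A \<Longrightarrow> f (s1 c x) = s2 c (f x)"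
  unfolding lin_on_def by blast

lemma lin_on_zero: "lin_on s1 s2 A B f \<Longrightarrow> 0 \<in> A \<Longrightarrow> f 0 = 0"
  using lin_on_add[of s1 s2 A B f 0 0] by simp

lemma lin_on_sum:
  assumes f: "lin_on s1 s2 A B f" and "0 \<in> A" and "\<And>x y. x \<in> A \<Longrightarrow> y \<in> A \<Longrightarrow> x + y \<in> A"
    and "finite S" and "\<And>a. a \<in> S \<Longrightarrow> g a \<in> A"
  shows "f (sum g S) = (\<Sum>a\<in>S. f (g a))"
proof -
  have "f (sum g S) = (\<Sum>a\<in>S. f (g a)) \<and> sum g S \<in> A"
    using assms(4,5)
    by (induction S rule: finite_induct) (auto simp: lin_on_zero[OF f] lin_on_add[OF f] assms(2,3))
  then show ?thesis ..
qed

lemma equivariant_lin_on: "equivariant G s1 s2 A B r1 r2 f \<Longrightarrow> lin_on s1 s2 A B f"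
  unfolding equivariant_def by blast

lemma equivariantD:
  "equivariant G s1 s2 A B r1 r2 f \<Longrightarrow> g \<in> carrier G \<Longrightarrow> x \<in> A \<Longrightarrow> f (r1 g x) = r2 g (f x)"
  unfolding equivariant_def by blast

context vector_space
begin

lemma lin_on_diff:
  assumes f: "lin_on scale scale A B f" and A: "subspace A" and "x \<in> A" "y \<in> A"
  shows "f (x - y) = f x - f y"
proof -
  have "f (x + (-1) *s y) = f x + (-1) *s f y"
    using assms lin_on_add[OF f] lin_on_scale[OF f] subspace_scale[OF A] by metis
  then show ?thesis by simp
qed

lemma lin_on_inj_onI:
  assumes f: "lin_on scale scale A B f" and A: "subspace A"
    and ker: "\<And>x. x \<in> A \<Longrightarrow> f x = 0 \<Longrightarrow> x = 0"
  shows "inj_on f A"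
proof (rule inj_onI)
  fix x y assume "x \<in> A" "y \<in> A" "f x = f y"
  then have "f (x - y) = 0" using lin_on_diff[OF f A] by simp
  then show "x = y" using ker subspace_diff[OF A \<open>x \<in> A\<close> \<open>y \<in> A\<close>] by fastforce
qed

subsection \<open>Schur's lemma\<close>

lemma is_rep_subspace: "is_rep G scale W r \<Longrightarrow> subspace W"
  unfolding is_rep_def by blast

lemma is_rep_lin_on: "is_rep G scale W r \<Longrightarrow> g \<in> carrier G \<Longrightarrow> lin_on scale scale W W (r g)"
  unfolding is_rep_def by blast

lemma is_rep_zero: "is_rep G scale W r \<Longrightarrow> g \<in> carrier G \<Longrightarrow> r g 0 = 0"
  using is_rep_lin_on is_rep_subspace subspace_0 lin_on_zero by metis

lemma irred_rep_nonzero: "irred_rep G scale W r \<Longrightarrow> W \<noteq> {0}"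
  unfolding irred_rep_def by blast

lemma irred_rep_invariantD:
  "irred_rep G scale W r \<Longrightarrow> subspace S \<Longrightarrow> S \<subseteq> W \<Longrightarrow> (\<And>g. g \<in> carrier G \<Longrightarrow> r g ` S \<subseteq> S)
    \<Longrightarrow> S = {0} \<or> S = W"
  unfolding irred_rep_def by blast

lemma equivariant_kernel_invariant:
  assumes R1: "is_rep G scale W1 r1" and R2: "is_rep G scale W2 r2"
    and f: "equivariant G scale scale W1 W2 r1 r2 f"
  shows "subspace {x \<in> W1. f x = 0}"
    and "g \<in> carrier G \<Longrightarrow> r1 g ` {x \<in> W1. f x = 0} \<subseteq> {x \<in> W1. f x = 0}"
proof -
  have lin: "lin_on scale scale W1 W2 f" using equivariant_lin_on[OF f] .
  have S1: "subspace W1" using is_rep_subspace[OF R1] .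
  show "subspace {x \<in> W1. f x = 0}"
    by (rule subspaceI)
      (use subspace_0[OF S1] subspace_add[OF S1] subspace_scale[OF S1] lin_on_zero[OF lin]
         lin_on_add[OF lin] lin_on_scale[OF lin] in auto)
  show "r1 g ` {x \<in> W1. f x = 0} \<subseteq> {x \<in> W1. f x = 0}" if g: "g \<in> carrier G"
    using lin_on_mem[OF is_rep_lin_on[OF R1 g]] equivariantD[OF f g] is_rep_zero[OF R2 g] by auto
qed

lemma equivariant_image_invariant:
  assumes R1: "is_rep G scale W1 r1" and f: "equivariant G scale scale W1 W2 r1 r2 f"
  shows "subspace (f ` W1)" and "g \<in> carrier G \<Longrightarrow> r2 g ` f ` W1 \<subseteq> f ` W1"
proof -
  have lin: "lin_on scale scale W1 W2 f" using equivariant_lin_on[OF f] .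
  have S1: "subspace W1" using is_rep_subspace[OF R1] .
  show "subspace (f ` W1)"
  proof (rule subspaceI)
    show "0 \<in> f ` W1" using subspace_0[OF S1] lin_on_zero[OF lin] by (metis image_eqI)
  next
    fix a b assume "a \<in> f ` W1" "b \<in> f ` W1"
    then obtain x y where "x \<in> W1" "y \<in> W1" "a = f x" "b = f y" by blast
    then show "a + b \<in> f ` W1" using lin_on_add[OF lin] subspace_add[OF S1] by (metis image_eqI)
  next
    fix c a assume "a \<in> f ` W1"
    then obtain x where "x \<in> W1" "a = f x" by blast
    then show "c *s a \<in> f ` W1" using lin_on_scale[OF lin] subspace_scale[OF S1] by (metis image_eqI)
  qed
  show "r2 g ` f ` W1 \<subseteq> f ` W1" if g: "g \<in> carrier G"
  proof (rule image_subsetI)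
    fix a assume "a \<in> f ` W1"
    then obtain x where x: "x \<in> W1" "a = f x" by blast
    then have "r2 g a = f (r1 g x)" using equivariantD[OF f g] by simp
    then show "r2 g a \<in> f ` W1" using lin_on_mem[OF is_rep_lin_on[OF R1 g] x(1)] by blast
  qed
qed

lemma equivariant_nonisomorphic_eq_0:
  assumes R1: "is_rep G scale W1 r1" and R2: "is_rep G scale W2 r2"
    and irr1: "irred_rep G scale W1 r1" and irr2: "irred_rep G scale W2 r2"
    and noniso: "\<not> rep_iso G scale W1 W2 r1 r2"
    and f: "equivariant G scale scale W1 W2 r1 r2 f" and w: "w \<in> W1"
  shows "f w = 0"
proof -
  let ?K = "{x \<in> W1. f x = 0}"
  have lin: "lin_on scale scale W1 W2 f" using equivariant_lin_on[OF f] .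
  have "?K \<noteq> {0}"
  proof
    assume K: "?K = {0}"
    have "inj_on f W1"
      using lin_on_inj_onI[OF lin is_rep_subspace[OF R1]] K by blast
    moreover have "f ` W1 = {0} \<or> f ` W1 = W2"
      using irred_rep_invariantD[OF irr2] equivariant_image_invariant[OF R1 f] lin_on_mem[OF lin]
      by blast
    moreover have "f ` W1 \<noteq> {0}"
      using K irred_rep_nonzero[OF irr1] subspace_0[OF is_rep_subspace[OF R1]] by blast
    moreover have "\<not> bij_betw f W1 W2"
      using noniso f unfolding rep_iso_def by blast
    ultimately show False by (simp add: bij_betw_def)
  qed
  moreover have "?K = {0} \<or> ?K = W1"
    using irred_rep_invariantD[OF irr1] equivariant_kernel_invariant[OF R1 R2 f] by blast
  ultimately show ?thesis using w by blast
qed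

end

subsection \<open>Direct sums\<close>

lemma dsumI:
  assumes "\<And>k i. k \<in> I \<Longrightarrow> i < n k \<Longrightarrow> u k i \<in> W k"
    and "\<And>k i. \<not> (k \<in> I \<and> i < n k) \<Longrightarrow> u k i = 0"
    and "finite {(k, i). u k i \<noteq> 0}"
  shows "u \<in> dsum I W n"
  using assms unfolding dsum_def by auto

lemma dsum_mem: "u \<in> dsum I W n \<Longrightarrow> k \<in> I \<Longrightarrow> i < n k \<Longrightarrow> u k i \<in> W k"
  unfolding dsum_def by (metis (mono_tags, lifting) mem_Collect_eq)

lemma dsum_eq_0: "u \<in> dsum I W n \<Longrightarrow> \<not> (k \<in> I \<and> i < n k) \<Longrightarrow> u k i = 0"
  unfolding dsum_def by (metis (mono_tags, lifting) mem_Collect_eq)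

lemma dsum_finite_support: "u \<in> dsum I W n \<Longrightarrow> finite {(k, i). u k i \<noteq> 0}"
  unfolding dsum_def by blast

lemma zero_in_dsum: "(\<And>k. k \<in> I \<Longrightarrow> 0 \<in> W k) \<Longrightarrow> 0 \<in> dsum I W n"
  unfolding dsum_def by auto

lemma dsum_add:
  fixes W :: "'k \<Rightarrow> 'w::monoid_add set"
  assumes "\<And>k x y. k \<in> I \<Longrightarrow> x \<in> W k \<Longrightarrow> y \<in> W k \<Longrightarrow> x + y \<in> W k"
    and u: "u \<in> dsum I W n" and v: "v \<in> dsum I W n"
  shows "u + v \<in> dsum I W n"
proof (rule dsumI)
  have "{(k, i). (u + v) k i \<noteq> 0} \<subseteq> {(k, i). u k i \<noteq> 0} \<union> {(k, i). v k i \<noteq> 0}"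
    by auto
  then show "finite {(k, i). (u + v) k i \<noteq> 0}"
    using dsum_finite_support[OF u] dsum_finite_support[OF v] by (meson finite_UnI finite_subset)
qed (use assms dsum_mem[OF u] dsum_mem[OF v] dsum_eq_0[OF u] dsum_eq_0[OF v] in auto)

lemma dinj_apply: "dinj k i x k' i' = (if k' = k \<and> i' = i then x else 0)"
  by (simp add: dinj_def)

lemma dinj_same [simp]: "dinj k i x k i = x"
  by (simp add: dinj_def)

lemma dinj_0 [simp]: "dinj k i 0 = 0"
  by (auto simp: dinj_def fun_eq_iff)

lemma dinj_add: "dinj k i (x + y) = dinj k i x + dinj k i (y :: 'w::monoid_add)"
  by (auto simp: dinj_def fun_eq_iff)

lemma dinj_in_dsum:
  assumes "\<And>k. k \<in> I \<Longrightarrow> 0 \<in> W k" and "l \<in> I" "j < n l" "w \<in> W l"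
  shows "dinj l j w \<in> dsum I W n"
proof (rule dsumI)
  have "{(k, i). dinj l j w k i \<noteq> 0} \<subseteq> {(l, j)}" by (auto simp: dinj_def)
  then show "finite {(k, i). dinj l j w k i \<noteq> 0}" using finite_subset by blast
qed (use assms in \<open>auto simp: dinj_def\<close>)

lemma dsum_induct:
  fixes W :: "'k \<Rightarrow> 'w::monoid_add set"
  assumes u: "u \<in> dsum I W n" and W0: "\<And>k. k \<in> I \<Longrightarrow> 0 \<in> W k"
    and zero: "P 0"
    and dinj: "\<And>l j w. l \<in> I \<Longrightarrow> j < n l \<Longrightarrow> w \<in> W l \<Longrightarrow> P (dinj l j w)"
    and add: "\<And>u v. u \<in> dsum I W n \<Longrightarrow> v \<in> dsum I W n \<Longrightarrow> P u \<Longrightarrow> P v \<Longrightarrow> P (u + v)"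
  shows "P u"
proof -
  have "\<forall>u\<in>dsum I W n. {(k, i). u k i \<noteq> 0} \<subseteq> F \<longrightarrow> P u" if "finite F" for F
    using that
  proof (induction F rule: finite_induct)
    case empty
    have "u = 0" if "{(k, i). u k i \<noteq> 0} \<subseteq> {}" for u :: "'k \<Rightarrow> nat \<Rightarrow> 'w"
      using that by (auto simp: fun_eq_iff)
    then show ?case using zero by blast
  next
    case (insert p F)
    obtain l j where p: "p = (l, j)" by fastforce
    show ?case
    proof (intro ballI impI)
      fix u assume u: "u \<in> dsum I W n" and supp: "{(k, i). u k i \<noteq> 0} \<subseteq> insert p F"
      define u' where "u' = (\<lambda>k i. if k = l \<and> i = j then 0 else u k i)"
      have u': "u' \<in> dsum I W n"
      proof (rule dsumI)
        have "{(k, i). u' k i \<noteq> 0} \<subseteq> {(k, i). u k i \<noteq> 0}" by (auto simp: u'_def)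
        then show "finite {(k, i). u' k i \<noteq> 0}" using dsum_finite_support[OF u] finite_subset by blast
      qed (use W0 dsum_mem[OF u] dsum_eq_0[OF u] in \<open>auto simp: u'_def\<close>)
      have "{(k, i). u' k i \<noteq> 0} \<subseteq> F"
        using supp by (auto simp: u'_def p)
      then have "P u'"
        using insert.IH u' by blast
      show "P u"
      proof (cases "l \<in> I \<and> j < n l")
        case True
        then have "u = dinj l j (u l j) + u'" by (auto simp: u'_def dinj_def fun_eq_iff)
        then show ?thesis
          using add[OF dinj_in_dsum[OF W0] u'] dinj dsum_mem[OF u] True \<open>P u'\<close> by metis
      next
        case False
        then have "u' = u" using dsum_eq_0[OF u] by (auto simp: u'_def fun_eq_iff)
        then show ?thesis using \<open>P u'\<close> by simp
      qed
    qed
  qed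
  then show ?thesis using u dsum_finite_support[OF u] by blast
qed

lemma dsum_additive_eqI:
  fixes W :: "'k \<Rightarrow> 'w::monoid_add set" and f g :: "('k \<Rightarrow> nat \<Rightarrow> 'w) \<Rightarrow> 'v::ab_group_add"
  assumes W0: "\<And>k. k \<in> I \<Longrightarrow> 0 \<in> W k"
    and f: "\<And>x y. x \<in> dsum I W n \<Longrightarrow> y \<in> dsum I W n \<Longrightarrow> f (x + y) = f x + f y"
    and g: "\<And>x y. x \<in> dsum I W n \<Longrightarrow> y \<in> dsum I W n \<Longrightarrow> g (x + y) = g x + g y"
    and dinj: "\<And>l j w. l \<in> I \<Longrightarrow> j < n l \<Longrightarrow> w \<in> W l \<Longrightarrow> f (dinj l j w) = g (dinj l j w)"
    and u: "u \<in> dsum I W n"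
  shows "f u = g u"
proof (rule dsum_induct[OF u W0, where P = "\<lambda>u. f u = g u"])
  show "f 0 = g 0"
    using f[of 0 0] g[of 0 0] zero_in_dsum[of I W n, OF W0] by simp
qed (use dinj f g in simp_all)

lemma drep_apply: "k \<in> I \<Longrightarrow> i < n k \<Longrightarrow> drep I n \<rho> g u k i = \<rho> k g (u k i)"
  by (simp add: drep_def)

lemma (in vector_space) dinj_scale: "dinj k i (c *s x) = dscale scale c (dinj k i x)"
  by (auto simp: dinj_def dscale_def fun_eq_iff)

lemma (in vector_space) blk_scale:
  assumes "lin_on (dscale scale) (dscale scale) A B t" and "dinj l j w \<in> A"
  shows "blk t k i l j (c *s w) = c *s blk t k i l j w"
  using lin_on_scale[OF assms] by (simp add: blk_def dinj_scale dscale_def)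

lemma blk_mem:
  assumes "lin_on s1 s2 A (dsum I W q) t" and "dinj l j w \<in> A" and "k \<in> I" "i < q k"
  shows "blk t k i l j w \<in> W k"
  unfolding blk_def using dsum_mem[OF lin_on_mem[OF assms(1,2)] assms(3,4)] .

subsection \<open>Equivariant maps between sums of irreducible representations\<close>

locale irrep_family = vector_space s
  for s :: "'a::field \<Rightarrow> 'w::ab_group_add \<Rightarrow> 'w" +
  fixes G :: "('g, 'b) monoid_scheme" and I :: "'k set"
    and W :: "'k \<Rightarrow> 'w set" and \<rho> :: "'k \<Rightarrow> 'g \<Rightarrow> 'w \<Rightarrow> 'w"
  assumes rep: "k \<in> I \<Longrightarrow> is_rep G s (W k) (\<rho> k)"
    and irreducible: "k \<in> I \<Longrightarrow> irred_rep G s (W k) (\<rho> k)"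
    and schur: "k \<in> I \<Longrightarrow> schur_strong G s (W k) (\<rho> k)"
    and nonisomorphic: "k \<in> I \<Longrightarrow> l \<in> I \<Longrightarrow> k \<noteq> l \<Longrightarrow> \<not> rep_iso G s (W k) (W l) (\<rho> k) (\<rho> l)"
begin

abbreviation dsum_linear where
  "dsum_linear n m t \<equiv> lin_on (dscale s) (dscale s) (dsum I W n) (dsum I W m) t"

abbreviation dsum_equivariant where
  "dsum_equivariant n m L \<equiv>
     equivariant G (dscale s) (dscale s) (dsum I W n) (dsum I W m) (drep I n \<rho>) (drep I m \<rho>) L"

lemma zero_in_W: "k \<in> I \<Longrightarrow> 0 \<in> W k"
  using subspace_0 is_rep_subspace rep by blast

lemma add_in_W: "k \<in> I \<Longrightarrow> x \<in> W k \<Longrightarrow> y \<in> W k \<Longrightarrow> x + y \<in> W k"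
  using subspace_add is_rep_subspace rep by blast

lemma dsum_contains_0: "0 \<in> dsum I W n"
  by (rule zero_in_dsum[OF zero_in_W])

lemma dsum_closed_add: "u \<in> dsum I W n \<Longrightarrow> v \<in> dsum I W n \<Longrightarrow> u + v \<in> dsum I W n"
  by (rule dsum_add[OF add_in_W])

lemma dinj_mem_dsum: "l \<in> I \<Longrightarrow> j < n l \<Longrightarrow> w \<in> W l \<Longrightarrow> dinj l j w \<in> dsum I W n"
  by (rule dinj_in_dsum[OF zero_in_W])

lemma drep_dinj:
  assumes "l \<in> I" "j < n l" "g \<in> carrier G"
  shows "drep I n \<rho> g (dinj l j w) = dinj l j (\<rho> l g w)"
  using assms is_rep_zero[OF rep] by (auto simp: drep_def dinj_def fun_eq_iff)

lemma equivariant_elementary: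
  assumes k: "k \<in> I" "i < m k" and j: "j < n k"
  shows "dsum_equivariant n m (\<lambda>u. dinj k i (u k j))"
  unfolding equivariant_def lin_on_def
proof (intro conjI ballI allI image_subsetI)
  fix u assume u: "u \<in> dsum I W n"
  show "dinj k i (u k j) \<in> dsum I W m" by (rule dinj_mem_dsum[where n = m, OF k dsum_mem[OF u k(1) j]])
next
  fix g u assume "g \<in> carrier G"
  then show "dinj k i (drep I n \<rho> g u k j) = drep I m \<rho> g (dinj k i (u k j))"
    using k j by (simp add: drep_dinj drep_apply)
next
  fix c u
  show "dinj k i (dscale s c u k j) = dscale s c (dinj k i (u k j))"
    by (simp add: dscale_def dinj_scale)
qed (simp add: dinj_add)

lemma equivariant_entry:
  assumes L: "dsum_equivariant n m L" and l: "l \<in> I" "j < n l" and k: "k \<in> I" "i < m k"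
  shows "equivariant G s s (W l) (W k) (\<rho> l) (\<rho> k) (\<lambda>w. L (dinj l j w) k i)"
proof -
  have lin: "dsum_linear n m L" using equivariant_lin_on[OF L] .
  have x: "dinj l j w \<in> dsum I W n" if "w \<in> W l" for w using l that by (rule dinj_mem_dsum)
  show ?thesis
    unfolding equivariant_def lin_on_def
  proof (intro conjI ballI allI image_subsetI)
    fix w assume "w \<in> W l"
    then show "L (dinj l j w) k i \<in> W k" using blk_mem[OF lin x k] by (simp add: blk_def)
  next
    fix v w assume "v \<in> W l" "w \<in> W l"
    then show "L (dinj l j (v + w)) k i = L (dinj l j v) k i + L (dinj l j w) k i"
      using lin_on_add[OF lin x x] by (simp add: dinj_add)
  next
    fix c w assume "w \<in> W l"
    then show "L (dinj l j (s c w)) k i = s c (L (dinj l j w) k i)"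
      using lin_on_scale[OF lin x] by (simp add: dinj_scale dscale_def)
  next
    fix g w assume g: "g \<in> carrier G" and "w \<in> W l"
    then show "L (dinj l j (\<rho> l g w)) k i = \<rho> k g (L (dinj l j w) k i)"
      using equivariantD[OF L g x] k by (simp add: drep_dinj[where n = n, OF l g, symmetric] drep_apply)
  qed
qed

lemma equivariant_entry_offdiag:
  assumes L: "dsum_equivariant n m L" and "l \<in> I" "j < n l" "k \<in> I" "i < m k" "k \<noteq> l" "w \<in> W l"
  shows "L (dinj l j w) k i = 0"
  by (rule equivariant_nonisomorphic_eq_0[OF rep rep irreducible irreducible nonisomorphic
      equivariant_entry[OF L]]) (use assms in simp_all)

lemma equivariant_entry_scalar:
  assumes L: "dsum_equivariant n m L" and "k \<in> I" "j < n k" "i < m k"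
  shows "\<exists>c. \<forall>w\<in>W k. L (dinj k j w) k i = s c w"
  using schur[of k] equivariant_entry[OF L] assms unfolding schur_strong_def by blast

lemma equivariant_dinj_eq_sum:
  assumes L: "dsum_equivariant n m L" and l: "l \<in> I" "j < n l" and w: "w \<in> W l"
  shows "L (dinj l j w) = (\<Sum>i<m l. dinj l i (L (dinj l j w) l i))"
proof (intro ext)
  fix k i
  have Lx: "L (dinj l j w) \<in> dsum I W m"
    using lin_on_mem[OF equivariant_lin_on[OF L] dinj_mem_dsum[where n = n, OF l w]] .
  have "(\<Sum>i'<m l. dinj l i' (L (dinj l j w) l i')) k i
      = (if k = l \<and> i < m l then L (dinj l j w) l i else 0)"
    by (cases "k = l") (simp_all add: sum_apply dinj_apply)
  moreover have "L (dinj l j w) k i = (if k = l \<and> i < m l then L (dinj l j w) l i else 0)"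
  proof (cases "k \<in> I \<and> i < m k")
    case True
    then show ?thesis using equivariant_entry_offdiag[OF L l _ _ _ w, of k i] by auto
  next
    case False
    then show ?thesis using dsum_eq_0[OF Lx False] l by auto
  qed
  ultimately show "L (dinj l j w) k i = (\<Sum>i'<m l. dinj l i' (L (dinj l j w) l i')) k i"
    by simp
qed

lemma equivariant_apply_eq_sum:
  assumes L: "dsum_equivariant n m L" and k: "k \<in> I" "i < m k" and v: "v \<in> dsum I W n"
  shows "L v k i = (\<Sum>j<n k. L (dinj k j (v k j)) k i)"
proof (rule dsum_additive_eqI[OF zero_in_W _ _ _ v])
  have lin: "dsum_linear n m L" using equivariant_lin_on[OF L] .
  fix x y assume x: "x \<in> dsum I W n" and y: "y \<in> dsum I W n"
  show "L (x + y) k i = L x k i + L y k i" using lin_on_add[OF lin x y] by simp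
  have "L (dinj k j ((x + y) k j)) k i = L (dinj k j (x k j)) k i + L (dinj k j (y k j)) k i"
    if "j < n k" for j
    using lin_on_add[OF lin] dinj_mem_dsum[where n = n, OF k(1) that] dsum_mem[OF x k(1) that]
      dsum_mem[OF y k(1) that] by (simp add: dinj_add)
  then show "(\<Sum>j<n k. L (dinj k j ((x + y) k j)) k i)
      = (\<Sum>j<n k. L (dinj k j (x k j)) k i) + (\<Sum>j<n k. L (dinj k j (y k j)) k i)"
    by (simp add: sum.distrib)
next
  have L0: "L 0 = 0" using lin_on_zero[OF equivariant_lin_on[OF L] dsum_contains_0] .
  fix l j w assume l: "l \<in> I" "j < n l" and w: "w \<in> W l"
  show "L (dinj l j w) k i = (\<Sum>j'<n k. L (dinj k j' (dinj l j w k j')) k i)"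
  proof (cases "k = l")
    case True
    then show ?thesis using l L0 by (simp add: dinj_apply sum_eq_single[of _ j])
  next
    case False
    then show ?thesis using equivariant_entry_offdiag[OF L l k False w] L0 by (simp add: dinj_apply)
  qed
qed

abbreviation commutes_with_equivariant where
  "commutes_with_equivariant n m tU tV \<equiv>
     \<forall>L. dsum_equivariant n m L \<longrightarrow> (\<forall>u\<in>dsum I W n. tV (L u) = L (tU u))"

abbreviation diagonal_blocks_coincide where
  "diagonal_blocks_coincide n m tU tV \<equiv> \<forall>k\<in>I. m k \<noteq> 0 \<and> n k \<noteq> 0 \<longrightarrow>
        (\<forall>i<m k. \<forall>i'<m k. i \<noteq> i' \<longrightarrow> (\<forall>w\<in>W k. blk tV k i k i' w = 0))
      \<and> (\<forall>j<n k. \<forall>j'<n k. j \<noteq> j' \<longrightarrow> (\<forall>w\<in>W k. blk tU k j k j' w = 0))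
      \<and> (\<forall>i<m k. \<forall>j<n k. \<forall>w\<in>W k. blk tV k i k i w = blk tU k j k j w)"

abbreviation source_cross_blocks_vanish where
  "source_cross_blocks_vanish n m tU \<equiv> \<forall>k\<in>I. \<forall>l\<in>I. k \<noteq> l \<and> m k \<noteq> 0 \<and> n k \<noteq> 0 \<and> n l \<noteq> 0 \<longrightarrow>
        (\<forall>i<n k. \<forall>j<n l. \<forall>w\<in>W l. blk tU k i l j w = 0)"

abbreviation target_cross_blocks_vanish where
  "target_cross_blocks_vanish n m tV \<equiv> \<forall>k\<in>I. \<forall>l\<in>I. k \<noteq> l \<and> m k \<noteq> 0 \<and> m l \<noteq> 0 \<and> n l \<noteq> 0 \<longrightarrow>
        (\<forall>i<m k. \<forall>j<m l. \<forall>w\<in>W l. blk tV k i l j w = 0)"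

text \<open>Testing the commutation on the elementary map \<open>u \<mapsto> dinj k i (u k j)\<close> and the
  generator \<open>dinj l j' w\<close> compares single entries of \<open>tV\<close> and \<open>tU\<close>.\<close>
lemma commuting_elementary:
  assumes H: "commutes_with_equivariant n m tU tV"
    and "k \<in> I" "i < m k" "j < n k" "l \<in> I" "j' < n l" "w \<in> W l"
  shows "blk tV k' i' k i (dinj l j' w k j) = dinj k i (blk tU k j l j' w) k' i'"
proof -
  have "tV (dinj k i (dinj l j' w k j)) = dinj k i (tU (dinj l j' w) k j)"
    using H equivariant_elementary[where m = m and n = n, OF assms(2-4)]
      dinj_mem_dsum[where n = n, OF assms(5-7)] by blast
  then show ?thesis by (simp add: blk_def)
qed

lemma commuting_imp_diagonal_blocks_coincide:
  assumes H: "commutes_with_equivariant n m tU tV" and tV: "dsum_linear m m tV"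
  shows "diagonal_blocks_coincide n m tU tV"
proof (intro ballI impI conjI allI)
  fix k assume k: "k \<in> I" and "m k \<noteq> 0 \<and> n k \<noteq> 0"
  then have m: "0 < m k" and n: "0 < n k" by auto
  have tV0: "blk tV k i k i' 0 = 0" for i i'
    using lin_on_zero[OF tV dsum_contains_0] by (simp add: blk_def)
  show "blk tV k i k i' w = 0" if "i < m k" "i' < m k" "i \<noteq> i'" "w \<in> W k" for i i' w
    using commuting_elementary[OF H k that(2) n k n that(4), of k i] that by (simp add: dinj_apply)
  show "blk tU k j k j' w = 0" if "j < n k" "j' < n k" "j \<noteq> j'" "w \<in> W k" for j j' w
    using commuting_elementary[OF H k m that(1) k that(2,4), of k 0] that tV0
    by (simp add: dinj_apply)
  show "blk tV k i k i w = blk tU k j k j w" if "i < m k" "j < n k" "w \<in> W k" for i j w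
    using commuting_elementary[OF H k that(1,2) k that(2,3), of k i] by simp
qed

lemma commuting_imp_source_cross_blocks_vanish:
  assumes H: "commutes_with_equivariant n m tU tV" and tV: "dsum_linear m m tV"
  shows "source_cross_blocks_vanish n m tU"
proof (intro ballI impI allI)
  fix k l i j w assume k: "k \<in> I" and l: "l \<in> I" and c: "k \<noteq> l \<and> m k \<noteq> 0 \<and> n k \<noteq> 0 \<and> n l \<noteq> 0"
    and i: "i < n k" and j: "j < n l" and w: "w \<in> W l"
  have "blk tV k 0 k 0 0 = 0"
    using lin_on_zero[OF tV dsum_contains_0] by (simp add: blk_def)
  then show "blk tU k i l j w = 0"
    using commuting_elementary[OF H k _ i l j w, of 0 k 0] c by (simp add: dinj_apply)
qed

lemma commuting_imp_target_cross_blocks_vanish: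
  assumes H: "commutes_with_equivariant n m tU tV"
  shows "target_cross_blocks_vanish n m tV"
proof (intro ballI impI allI)
  fix k l i j w assume k: "k \<in> I" and l: "l \<in> I" and c: "k \<noteq> l \<and> m k \<noteq> 0 \<and> m l \<noteq> 0 \<and> n l \<noteq> 0"
    and i: "i < m k" and j: "j < m l" and w: "w \<in> W l"
  then show "blk tV k i l j w = 0"
    using commuting_elementary[OF H l j _ l _ w, of 0 0 k i] by (simp add: dinj_apply)
qed

lemma lin_on_equivariant_dinj_eq_sum:
  assumes t: "dsum_linear m q t" and L: "dsum_equivariant n m L"
    and l: "l \<in> I" "j < n l" and w: "w \<in> W l"
  shows "t (L (dinj l j w)) k i = (\<Sum>i'<m l. blk t k i l i' (L (dinj l j w) l i'))"
proof -
  let ?x = "L (dinj l j w)"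
  have "?x l i' \<in> W l" if "i' < m l" for i'
    using dsum_mem[OF lin_on_mem[OF equivariant_lin_on[OF L] dinj_mem_dsum[where n = n, OF l w]]
        l(1) that] .
  then have "t (\<Sum>i'<m l. dinj l i' (?x l i')) = (\<Sum>i'<m l. t (dinj l i' (?x l i')))"
    by (intro lin_on_sum[OF t dsum_contains_0 dsum_closed_add]) (simp_all add: dinj_mem_dsum l(1))
  then have "t ?x = (\<Sum>i'<m l. t (dinj l i' (?x l i')))"
    using equivariant_dinj_eq_sum[OF L l w] by simp
  then show ?thesis by (simp add: sum_apply blk_def)
qed

lemma commuting_on_dinj_cross_entry:
  assumes crossU: "source_cross_blocks_vanish n m tU" and crossV: "target_cross_blocks_vanish n m tV"
    and tU: "dsum_linear n n tU" and tV: "dsum_linear m m tV" and L: "dsum_equivariant n m L"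
    and l: "l \<in> I" "j < n l" and w: "w \<in> W l" and k: "k \<in> I" "i < m k" and "k \<noteq> l"
  shows "tV (L (dinj l j w)) k i = L (tU (dinj l j w)) k i"
proof -
  have lin: "dsum_linear n m L" using equivariant_lin_on[OF L] .
  have x: "dinj l j w \<in> dsum I W n" using l w by (rule dinj_mem_dsum)
  have "blk tV k i l i' (L (dinj l j w) l i') = 0" if "i' < m l" for i'
  proof -
    have "m k \<noteq> 0 \<and> m l \<noteq> 0 \<and> n l \<noteq> 0" using k(2) that l(2) by auto
    then show ?thesis
      using crossV k(1) l(1) \<open>k \<noteq> l\<close> k(2) that dsum_mem[OF lin_on_mem[OF lin x] l(1) that]
      by blast
  qed
  then have "tV (L (dinj l j w)) k i = 0"
    using lin_on_equivariant_dinj_eq_sum[OF tV L l w] by simp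
  moreover have "blk tU k j' l j w = 0" if "j' < n k" for j'
  proof -
    have "m k \<noteq> 0 \<and> n k \<noteq> 0 \<and> n l \<noteq> 0" using k(2) that l(2) by auto
    then show ?thesis using crossU k(1) l(1) \<open>k \<noteq> l\<close> that l(2) w by blast
  qed
  then have "L (tU (dinj l j w)) k i = 0"
    using equivariant_apply_eq_sum[OF L k lin_on_mem[OF tU x]] lin_on_zero[OF lin dsum_contains_0]
    by (simp add: blk_def)
  ultimately show ?thesis by simp
qed

text \<open>On a diagonal block both sides reduce to the scalar by which \<open>L\<close> acts on that block,
  applied to the common diagonal entry of \<open>tU\<close> and \<open>tV\<close>.\<close>
lemma commuting_on_dinj_diagonal_entry:
  assumes diag: "diagonal_blocks_coincide n m tU tV"
    and tU: "dsum_linear n n tU" and tV: "dsum_linear m m tV" and L: "dsum_equivariant n m L"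
    and k: "k \<in> I" "i < m k" and j: "j < n k" and w: "w \<in> W k"
  shows "tV (L (dinj k j w)) k i = L (tU (dinj k j w)) k i"
proof -
  have lin: "dsum_linear n m L" using equivariant_lin_on[OF L] .
  have x: "dinj k j w \<in> dsum I W n" using k(1) j w by (rule dinj_mem_dsum)
  have kk: "m k \<noteq> 0 \<and> n k \<noteq> 0" using k(2) j by auto
  have offV: "blk tV k i k i' v = 0" if "i' < m k" "i' \<noteq> i" "v \<in> W k" for i' v
    using diag k kk that by blast
  have offU: "blk tU k j' k j v = 0" if "j' < n k" "j' \<noteq> j" "v \<in> W k" for j' v
    using diag k kk j that by blast
  have diagUV: "blk tV k i k i w = blk tU k j k j w"
    using diag k kk j w by blast
  obtain c where c: "\<And>v. v \<in> W k \<Longrightarrow> L (dinj k j v) k i = s c v"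
    using equivariant_entry_scalar[OF L k(1) j k(2)] by blast
  have "tV (L (dinj k j w)) k i = (\<Sum>i'<m k. blk tV k i k i' (L (dinj k j w) k i'))"
    by (rule lin_on_equivariant_dinj_eq_sum[OF tV L k(1) j w])
  also have "\<dots> = blk tV k i k i (L (dinj k j w) k i)"
    by (rule sum_eq_single) (use k(2) offV dsum_mem[OF lin_on_mem[OF lin x] k(1)] in auto)
  also have "\<dots> = s c (blk tU k j k j w)"
    using c[OF w] blk_scale[OF tV dinj_mem_dsum[where n = m, OF k w]] diagUV by simp
  also have "\<dots> = L (dinj k j (blk tU k j k j w)) k i"
    using c blk_mem[OF tU x k(1) j] by simp
  also have "\<dots> = (\<Sum>j'<n k. L (dinj k j' (blk tU k j' k j w)) k i)"
    by (rule sum_eq_single[symmetric]) (use j offU w lin_on_zero[OF lin dsum_contains_0] in auto)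
  also have "\<dots> = L (tU (dinj k j w)) k i"
    using equivariant_apply_eq_sum[OF L k lin_on_mem[OF tU x]] by (simp add: blk_def)
  finally show ?thesis .
qed

lemma commuting_on_dinj:
  assumes "diagonal_blocks_coincide n m tU tV"
    and "source_cross_blocks_vanish n m tU" and "target_cross_blocks_vanish n m tV"
    and tU: "dsum_linear n n tU" and tV: "dsum_linear m m tV"
    and L: "dsum_equivariant n m L" and l: "l \<in> I" "j < n l" and w: "w \<in> W l"
  shows "tV (L (dinj l j w)) = L (tU (dinj l j w))"
proof (intro ext)
  fix k i
  show "tV (L (dinj l j w)) k i = L (tU (dinj l j w)) k i"
  proof (cases "k \<in> I \<and> i < m k")
    case False
    have lin: "dsum_linear n m L" using equivariant_lin_on[OF L] .
    have x: "dinj l j w \<in> dsum I W n" using l w by (rule dinj_mem_dsum)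
    show ?thesis
      using dsum_eq_0[OF lin_on_mem[OF tV lin_on_mem[OF lin x]] False]
        dsum_eq_0[OF lin_on_mem[OF lin lin_on_mem[OF tU x]] False] by simp
  next
    case True
    then show ?thesis
      using commuting_on_dinj_cross_entry[OF assms(2-6) l w] commuting_on_dinj_diagonal_entry[OF assms(1,4-6)]
        l w by (cases "k = l") auto
  qed
qed

lemma conditions_imp_commuting:
  assumes "diagonal_blocks_coincide n m tU tV"
    and "source_cross_blocks_vanish n m tU" and "target_cross_blocks_vanish n m tV"
    and tU: "dsum_linear n n tU" and tV: "dsum_linear m m tV"
  shows "commutes_with_equivariant n m tU tV"
proof (intro allI impI ballI)
  fix L u assume L: "dsum_equivariant n m L" and u: "u \<in> dsum I W n"
  have lin: "dsum_linear n m L" using equivariant_lin_on[OF L] .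
  show "tV (L u) = L (tU u)"
  proof (rule dsum_additive_eqI[OF _ _ _ _ u])
    fix x y assume x: "x \<in> dsum I W n" and y: "y \<in> dsum I W n"
    show "tV (L (x + y)) = tV (L x) + tV (L y)"
      using lin_on_add[OF lin x y] lin_on_add[OF tV lin_on_mem[OF lin x] lin_on_mem[OF lin y]] by simp
    show "L (tU (x + y)) = L (tU x) + L (tU y)"
      using lin_on_add[OF tU x y] lin_on_add[OF lin lin_on_mem[OF tU x] lin_on_mem[OF tU y]] by simp
  qed (use zero_in_W commuting_on_dinj[OF assms L] in simp_all)
qed

theorem commutes_with_equivariant_iff:
  assumes tU: "dsum_linear n n tU" and tV: "dsum_linear m m tV"
  shows "commutes_with_equivariant n m tU tV \<longleftrightarrow> diagonal_blocks_coincide n m tU tV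
    \<and> source_cross_blocks_vanish n m tU \<and> target_cross_blocks_vanish n m tV"
proof (intro iffI conjI)
  assume H: "commutes_with_equivariant n m tU tV"
  show "diagonal_blocks_coincide n m tU tV" using H tV by (rule commuting_imp_diagonal_blocks_coincide)
  show "source_cross_blocks_vanish n m tU" using H tV by (rule commuting_imp_source_cross_blocks_vanish)
  show "target_cross_blocks_vanish n m tV" using H by (rule commuting_imp_target_cross_blocks_vanish)
next
  assume "diagonal_blocks_coincide n m tU tV
    \<and> source_cross_blocks_vanish n m tU \<and> target_cross_blocks_vanish n m tV"
  then show "commutes_with_equivariant n m tU tV"
    using conditions_imp_commuting[OF _ _ _ tU tV] by blast
qed

end

theorem proposition5p1:
  fixes G :: "('g, 'b) monoid_scheme"
    and s :: "'a::field \<Rightarrow> 'w::ab_group_add \<Rightarrow> 'w"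
    and I :: "'k set" and W :: "'k \<Rightarrow> 'w set" and \<rho> :: "'k \<Rightarrow> 'g \<Rightarrow> 'w \<Rightarrow> 'w"
    and n m :: "'k \<Rightarrow> nat"
    and tU tV :: "('k \<Rightarrow> nat \<Rightarrow> 'w) \<Rightarrow> ('k \<Rightarrow> nat \<Rightarrow> 'w)"
  assumes "group G"
    and "vector_space s"
    and "\<forall>k\<in>I. is_rep G s (W k) (\<rho> k) \<and> irred_rep G s (W k) (\<rho> k) \<and> schur_strong G s (W k) (\<rho> k)"
    and "\<forall>k\<in>I. \<forall>l\<in>I. k \<noteq> l \<longrightarrow> \<not> rep_iso G s (W k) (W l) (\<rho> k) (\<rho> l)"
    and "lin_on (dscale s) (dscale s) (dsum I W n) (dsum I W n) tU"
    and "lin_on (dscale s) (dscale s) (dsum I W m) (dsum I W m) tV"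
  shows "(\<forall>L. equivariant G (dscale s) (dscale s) (dsum I W n) (dsum I W m) (drep I n \<rho>) (drep I m \<rho>) L
             \<longrightarrow> (\<forall>u\<in>dsum I W n. tV (L u) = L (tU u)))
    \<longleftrightarrow>
    ((\<forall>k\<in>I. m k \<noteq> 0 \<and> n k \<noteq> 0 \<longrightarrow>
        (\<forall>i<m k. \<forall>i'<m k. i \<noteq> i' \<longrightarrow> (\<forall>w\<in>W k. blk tV k i k i' w = 0))
      \<and> (\<forall>j<n k. \<forall>j'<n k. j \<noteq> j' \<longrightarrow> (\<forall>w\<in>W k. blk tU k j k j' w = 0))
      \<and> (\<forall>i<m k. \<forall>j<n k. \<forall>w\<in>W k. blk tV k i k i w = blk tU k j k j w))
   \<and> (\<forall>k\<in>I. \<forall>l\<in>I. k \<noteq> l \<and> m k \<noteq> 0 \<and> n k \<noteq> 0 \<and> n l \<noteq> 0 \<longrightarrow>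
        (\<forall>i<n k. \<forall>j<n l. \<forall>w\<in>W l. blk tU k i l j w = 0))
   \<and> (\<forall>k\<in>I. \<forall>l\<in>I. k \<noteq> l \<and> m k \<noteq> 0 \<and> m l \<noteq> 0 \<and> n l \<noteq> 0 \<longrightarrow>
        (\<forall>i<m k. \<forall>j<m l. \<forall>w\<in>W l. blk tV k i l j w = 0)))"
proof -
  interpret irrep_family s G I W \<rho>
    by (intro irrep_family.intro irrep_family_axioms.intro) (use assms(2-4) in auto)
  show ?thesis
    using commutes_with_equivariant_iff[OF assms(5,6)] .
qed

end
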